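(* Let $p,q,n,d$ be positive integers with $p\le n$ and $q\ge n+d-p$. Let $A\in\mathbb{R}^{q\times n}$, $B\in\mathbb{R}^{q\times d}$, $C\in\mathbb{R}^{p\times n}$ of full row rank and $D\in\mathbb{R}^{p\times d}$. Set $\widetilde A=[A\ \ B]$, $\widetilde C=[C\ \ D]$. Let $\widetilde Q=[\widetilde Q_1\ \ \widetilde Q_2]$ be an orthogonal matrix of order $n+d$ with $\widetilde Q_1\in\mathbb{R}^{(n+d)\times p}$ and $\mathcal{R}(\widetilde Q_1)=\mathcal{R}(\widetilde C^T)$ (e.g. obtained from a QR factorization $\widetilde C^T=\widetilde Q\begin{bmatrix}\widetilde R_1\\ 0\end{bmatrix}$), so that the columns of $\widetilde Q_2\in\mathbb{R}^{(n+d)\times(n+d-p)}$ are an orthonormal basis of the null space of $\widetilde C$. Let $\widetilde A\widetilde Q_2=\widetilde U\widetilde\Sigma\widetilde V^T$ be a thin SVD, with $\widetilde U\in\mathbb{R}^{q\times(n+d-p)}$ having orthonormal columns, $\widetilde V$ orthogonal of order $n+d-p$, and $\widetilde\Sigma=\mathrm{diag}(\widetilde\sigma_1,\dots,\widetilde\sigma_{n+d-p})$, $\widetilde\sigma_1\ge\cdots\ge\widetilde\sigma_{n+d-p}\ge 0$. Let $k=n-p$, and write $\widetilde U=[\widetilde U_1\ \ \widetilde U_2]$, $\widetilde V=[\widetilde V_1\ \ \widetilde V_2]$ where $\widetilde U_1,\widetilde V_1$ consist of the first $k$ columns, and $\widetilde\Sigma_1=\mathrm{diag}(\widetilde\sigma_1,\dots,\widetilde\sigma_k)$.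 Put $\overline V_1=\widetilde Q_2\widetilde V_1=\begin{bmatrix}\overline V_{11}\\ \overline V_{21}\end{bmatrix}$ and $\overline V_2=\widetilde Q_2\widetilde V_2=\begin{bmatrix}\overline V_{12}\\ \overline V_{22}\end{bmatrix}$ with $\overline V_{11}\in\mathbb{R}^{n\times k}$, $\overline V_{21}\in\mathbb{R}^{d\times k}$, $\overline V_{12}\in\mathbb{R}^{n\times d}$, $\overline V_{22}\in\mathbb{R}^{d\times d}$. Assume $\widetilde\sigma_{n-p}>\widetilde\sigma_{n-p+1}$ (void if $n=p$) and that $\overline V_{22}$ is nonsingular. Then the TLSE problem has a unique TLSE solution, namely $X_n=-\overline V_{12}\overline V_{22}^{-1}$, and $X_n$ is also the solution of the consistent linear system $\widehat AX=\widehat B$, $CX=D$, where $\widehat A=\widetilde U_1\widetilde\Sigma_1\overline V_{11}^T$ and $\widehat B=\widetilde U_1\widetilde\Sigma_1\overline V_{21}^T$.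
   Context: The multidimensional total least squares problem with linear equality constraint (TLSE) is: minimize $\|[E\ \ F]\|_F$ over $E\in\mathbb{R}^{q\times n}$, $F\in\mathbb{R}^{q\times d}$ subject to the existence of $X\in\mathbb{R}^{n\times d}$ with $(A+E)X=B+F$ and $CX=D$. A TLSE solution is a matrix $X\in\mathbb{R}^{n\times d}$ with $CX=D$ and $(A+E)X=B+F$ for some minimizing pair $(E,F)$. $\mathcal R(\cdot)$ denotes column space. *)

theory Defs
  imports "Jordan_Normal_Form.Matrix" "Jordan_Normal_Form.DL_Rank"
    "Jordan_Normal_Form.Gauss_Jordan_Elimination"
begin

definition hcat :: "'a :: zero mat \<Rightarrow> 'a mat \<Rightarrow> 'a mat" where
  "hcat M N = four_block_mat M N (0\<^sub>m 0 (dim_col M)) (0\<^sub>m 0 (dim_col N))"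

text \<open>Vertical concatenation is the library's append_rows (infix @r).\<close>

definition fro_norm :: "real mat \<Rightarrow> real" where
  "fro_norm M = sqrt (\<Sum>i<dim_row M. \<Sum>j<dim_col M. (M $$ (i,j))\<^sup>2)"

definition orthogonal_of_order :: "nat \<Rightarrow> real mat \<Rightarrow> bool" where
  "orthogonal_of_order m Q \<longleftrightarrow> Q \<in> carrier_mat m m \<and> transpose_mat Q * Q = 1\<^sub>m m"

definition orthonormal_cols :: "real mat \<Rightarrow> bool" where
  "orthonormal_cols U \<longleftrightarrow> transpose_mat U * U = 1\<^sub>m (dim_col U)"

definition colspace :: "real mat \<Rightarrow> real vec set" where
  "colspace M = {M *\<^sub>v x | x. x \<in> carrier_vec (dim_col M)}"

definition full_row_rank :: "real mat \<Rightarrow> bool" where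
  "full_row_rank M \<longleftrightarrow> vec_space.rank (dim_row M) M = dim_row M"

definition tlse_feasible ::
  "real mat \<Rightarrow> real mat \<Rightarrow> real mat \<Rightarrow> real mat \<Rightarrow> real mat \<Rightarrow> real mat \<Rightarrow> real mat \<Rightarrow> bool" where
  "tlse_feasible A B C D E F X \<longleftrightarrow>
     E \<in> carrier_mat (dim_row A) (dim_col A) \<and> F \<in> carrier_mat (dim_row B) (dim_col B) \<and>
     X \<in> carrier_mat (dim_col A) (dim_col B) \<and>
     (A + E) * X = B + F \<and> C * X = D"

definition tlse_minimizer ::
  "real mat \<Rightarrow> real mat \<Rightarrow> real mat \<Rightarrow> real mat \<Rightarrow> real mat \<Rightarrow> real mat \<Rightarrow> bool" where
  "tlse_minimizer A B C D E F \<longleftrightarrow>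
     (\<exists>X. tlse_feasible A B C D E F X) \<and>
     (\<forall>E' F' X'. tlse_feasible A B C D E' F' X' \<longrightarrow> fro_norm (hcat E F) \<le> fro_norm (hcat E' F'))"

definition tlse_solution ::
  "real mat \<Rightarrow> real mat \<Rightarrow> real mat \<Rightarrow> real mat \<Rightarrow> real mat \<Rightarrow> bool" where
  "tlse_solution A B C D X \<longleftrightarrow>
     (\<exists>E F. tlse_minimizer A B C D E F \<and> tlse_feasible A B C D E F X)"

end

theory Submission
  imports Defs
begin

(*
  Write Z = [X; -I]. The constraint CX = D says that Z lies in the null space of [C D], so
  Z = Q2 V Y with Y = V^T Q2^T Z, and the block -I gives Y a left inverse. By the SVD,
  feasibility ([A B] + [E F]) Z = 0 becomes [E F] Q2 V Y = -U Sigma Y. If P is the orthogonal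
  projection onto the range of Y, then
    |[E F]|^2 >= |[E F] Q2 V P|^2 = |U Sigma P|^2 = sum_i sigma_i^2 P_ii,
  where 0 <= P_ii <= 1 and sum_i P_ii = d. So (Ky Fan) |[E F]|^2 is at least the sum of the d
  smallest sigma_i^2, a bound attained by -U Sigma_tail V^T Q2^T together with X = Xn. Because of
  the gap sigma_(k-1) > sigma_k (indices start at 0), equality forces P_ii = 0 for i < k, i.e. V1^T Q2^T Z = 0; the
  block -I then pins X down to Xn. The same condition V1^T Q2^T Z = 0 characterises the solutions
  of Ahat X = Bhat, CX = D, since [Ahat Bhat] = U1 Sigma_1 V1^T Q2^T and U1 Sigma_1 is injective.
*)

section \<open>Block matrices\<close>

text \<open>Library laws with dimension side conditions instead of carrier premises, so that the simplifier
  can discharge them.\<close>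

lemma assoc_mult_mat_dim:
  "dim_col (A :: 'a :: semiring_0 mat) = dim_row B \<Longrightarrow> dim_col B = dim_row C \<Longrightarrow> A * B * C = A * (B * C)"
  by (rule assoc_mult_mat[of A "dim_row A" "dim_col A" B "dim_col B" C "dim_col C"]) auto

lemma add_mult_distrib_mat_dim:
  "dim_row (A :: 'a :: semiring_0 mat) = dim_row B \<Longrightarrow> dim_col A = dim_col B \<Longrightarrow> dim_col A = dim_row C \<Longrightarrow>
   (A + B) * C = A * C + B * C"
  by (rule add_mult_distrib_mat[of A "dim_row A" "dim_col A" B C "dim_col C"]) auto

lemma mult_add_distrib_mat_dim:
  "dim_row (B :: 'a :: semiring_0 mat) = dim_row C \<Longrightarrow> dim_col B = dim_col C \<Longrightarrow> dim_col A = dim_row B \<Longrightarrow>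
   A * (B + C) = A * B + A * C"
  by (rule mult_add_distrib_mat[of A "dim_row A" "dim_col A" B "dim_col B" C]) auto

lemma transpose_mult_dim:
  "dim_col (A :: 'a :: comm_semiring_0 mat) = dim_row B \<Longrightarrow>
   transpose_mat (A * B) = transpose_mat B * transpose_mat A"
  by (rule transpose_mult[of A "dim_row A" "dim_col A" B "dim_col B"]) auto

lemma transpose_add_dim:
  "dim_row A = dim_row B \<Longrightarrow> dim_col A = dim_col B \<Longrightarrow>
   transpose_mat (A + B) = transpose_mat A + transpose_mat B"
  by (rule eq_matI) auto

lemma mult_left_cancel_one:
  "(P :: 'a :: semiring_1 mat) * R = 1\<^sub>m a \<Longrightarrow> dim_col P = dim_row R \<Longrightarrow> dim_col R = dim_row X \<Longrightarrow>
   P * (R * X) = X"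
proof -
  assume PR: "P * R = 1\<^sub>m a" and dims: "dim_col P = dim_row R" "dim_col R = dim_row X"
  have "dim_row X = a"
    using arg_cong[OF PR, of dim_col] dims by simp
  then have "(P * R) * X = X"
    unfolding PR by (intro left_mult_one_mat') simp
  then show ?thesis
    using dims by (simp add: assoc_mult_mat_dim)
qed

lemma dim_hcat[simp]:
  "dim_row (hcat M N) = dim_row M" "dim_col (hcat M N) = dim_col M + dim_col N"
  unfolding hcat_def by auto

lemma hcat_carrier_mat[simp, intro]:
  "M \<in> carrier_mat nr nc1 \<Longrightarrow> N \<in> carrier_mat nr nc2 \<Longrightarrow> hcat M N \<in> carrier_mat nr (nc1 + nc2)"
  unfolding carrier_mat_def by auto

lemma index_hcat:
  "M \<in> carrier_mat nr nc1 \<Longrightarrow> N \<in> carrier_mat nr nc2 \<Longrightarrow> i < nr \<Longrightarrow> j < nc1 + nc2 \<Longrightarrow>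
   hcat M N $$ (i, j) = (if j < nc1 then M $$ (i, j) else N $$ (i, j - nc1))"
  unfolding hcat_def by auto

lemma dim_append_rows[simp]:
  "dim_row (X @\<^sub>r Y) = dim_row X + dim_row Y" "dim_col (X @\<^sub>r Y) = dim_col X"
  unfolding append_rows_def by auto

lemma index_append_rows:
  "X \<in> carrier_mat nr1 nc \<Longrightarrow> Y \<in> carrier_mat nr2 nc \<Longrightarrow> i < nr1 + nr2 \<Longrightarrow> j < nc \<Longrightarrow>
   (X @\<^sub>r Y) $$ (i, j) = (if i < nr1 then X $$ (i, j) else Y $$ (i - nr1, j))"
  unfolding append_rows_def by auto

lemma transpose_hcat:
  "M \<in> carrier_mat nr nc1 \<Longrightarrow> N \<in> carrier_mat nr nc2 \<Longrightarrow>
   transpose_mat (hcat M N) = transpose_mat M @\<^sub>r transpose_mat N"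
  by (rule eq_matI) (auto simp: index_hcat index_append_rows)

lemma transpose_append_rows:
  "X \<in> carrier_mat nr1 nc \<Longrightarrow> Y \<in> carrier_mat nr2 nc \<Longrightarrow>
   transpose_mat (X @\<^sub>r Y) = hcat (transpose_mat X) (transpose_mat Y)"
  by (rule eq_matI) (auto simp: index_hcat index_append_rows)

lemma append_rows_inject:
  assumes X: "X \<in> carrier_mat nr1 nc" and Y: "Y \<in> carrier_mat nr2 nc"
    and X': "X' \<in> carrier_mat nr1 nc" and Y': "Y' \<in> carrier_mat nr2 nc"
    and eq: "X @\<^sub>r Y = X' @\<^sub>r Y'"
  shows "X = X'" "Y = Y'"
proof -
  have entry: "(X @\<^sub>r Y) $$ (i, j) = (X' @\<^sub>r Y') $$ (i, j)" for i j
    using eq by simp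
  show "X = X'"
  proof (rule eq_matI)
    fix i j assume "i < dim_row X'" "j < dim_col X'"
    then show "X $$ (i, j) = X' $$ (i, j)"
      using entry[of i j] X Y X' Y' by (simp add: index_append_rows)
  qed (use X X' in auto)
  show "Y = Y'"
  proof (rule eq_matI)
    fix i j assume "i < dim_row Y'" "j < dim_col Y'"
    then show "Y $$ (i, j) = Y' $$ (i, j)"
      using entry[of "nr1 + i" j] X Y X' Y' by (simp add: index_append_rows)
  qed (use Y Y' in auto)
qed

lemma hcat_mult_append_rows:
  assumes M: "M \<in> carrier_mat nr nc1" and N: "N \<in> carrier_mat nr nc2"
    and X: "X \<in> carrier_mat nc1 nc" and Y: "Y \<in> carrier_mat nc2 nc"
  shows "hcat M N * (X @\<^sub>r Y) = M * X + N * Y"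
proof -
  have "hcat M N = four_block_mat M N (0\<^sub>m 0 nc1) (0\<^sub>m 0 nc2)" "X @\<^sub>r Y = four_block_mat X (0\<^sub>m nc1 0) Y (0\<^sub>m nc2 0)"
    using M N X Y unfolding hcat_def append_rows_def by auto
  then have "hcat M N * (X @\<^sub>r Y) = four_block_mat (M * X + N * Y) (M * 0\<^sub>m nc1 0 + N * 0\<^sub>m nc2 0)
      (0\<^sub>m 0 nc1 * X + 0\<^sub>m 0 nc2 * Y) (0\<^sub>m 0 nc1 * 0\<^sub>m nc1 0 + 0\<^sub>m 0 nc2 * 0\<^sub>m nc2 0)"
    using M N X Y by (simp only:) (intro mult_four_block_mat, auto)
  also have "\<dots> = M * X + N * Y"
    using M N X Y by (intro eq_matI) auto
  finally show ?thesis .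
qed

lemma append_rows_mult:
  assumes X: "X \<in> carrier_mat nr1 nc" and Y: "Y \<in> carrier_mat nr2 nc" and K: "K \<in> carrier_mat nc nc'"
  shows "(X @\<^sub>r Y) * K = (X * K) @\<^sub>r (Y * K)"
proof -
  have "(X @\<^sub>r Y) * K = four_block_mat X (0\<^sub>m nr1 0) Y (0\<^sub>m nr2 0) * four_block_mat K (0\<^sub>m nc 0) (0\<^sub>m 0 nc') (0\<^sub>m 0 0)"
    using X Y K unfolding append_rows_def by (intro arg_cong2[where f = "(*)"] eq_matI) auto
  also have "\<dots> = four_block_mat (X * K + 0\<^sub>m nr1 0 * 0\<^sub>m 0 nc') (X * 0\<^sub>m nc 0 + 0\<^sub>m nr1 0 * 0\<^sub>m 0 0)
     (Y * K + 0\<^sub>m nr2 0 * 0\<^sub>m 0 nc') (Y * 0\<^sub>m nc 0 + 0\<^sub>m nr2 0 * 0\<^sub>m 0 0)"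
    using X Y K by (intro mult_four_block_mat) auto
  also have "\<dots> = (X * K) @\<^sub>r (Y * K)"
    using X Y K unfolding append_rows_def by (intro eq_matI) auto
  finally show ?thesis .
qed

lemma mult_hcat:
  assumes K: "(K :: 'a :: comm_semiring_0 mat) \<in> carrier_mat nr' nr"
    and M: "M \<in> carrier_mat nr nc1" and N: "N \<in> carrier_mat nr nc2"
  shows "K * hcat M N = hcat (K * M) (K * N)"
proof -
  have "transpose_mat (K * hcat M N) = transpose_mat (hcat M N) * transpose_mat K"
    using transpose_mult[OF K hcat_carrier_mat[OF M N]] .
  also have "\<dots> = (transpose_mat M * transpose_mat K) @\<^sub>r (transpose_mat N * transpose_mat K)"
    using K M N by (simp add: transpose_hcat append_rows_mult[of _ nc1 nr _ nc2 _ nr'])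
  also have "\<dots> = transpose_mat (K * M) @\<^sub>r transpose_mat (K * N)"
    using transpose_mult[OF K M] transpose_mult[OF K N] by simp
  also have "\<dots> = transpose_mat (hcat (K * M) (K * N))"
    using K M N by (intro transpose_hcat[symmetric]) auto
  finally show ?thesis
    by (metis transpose_transpose)
qed

lemma add_hcat:
  "M \<in> carrier_mat nr nc1 \<Longrightarrow> N \<in> carrier_mat nr nc2 \<Longrightarrow> M' \<in> carrier_mat nr nc1 \<Longrightarrow> N' \<in> carrier_mat nr nc2 \<Longrightarrow>
   hcat M N + hcat M' N' = hcat (M + M') (N + N')"
  unfolding hcat_def by (rule eq_matI) auto

lemma hcat_split:
  assumes "M \<in> carrier_mat nr (nc1 + nc2)"
  obtains M1 M2 where "M1 \<in> carrier_mat nr nc1" "M2 \<in> carrier_mat nr nc2" "M = hcat M1 M2"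
proof
  let ?M1 = "mat nr nc1 (($$) M)" and ?M2 = "mat nr nc2 (\<lambda>(i, j). M $$ (i, j + nc1))"
  show M1: "?M1 \<in> carrier_mat nr nc1" and M2: "?M2 \<in> carrier_mat nr nc2" by auto
  show "M = hcat ?M1 ?M2"
  proof (rule eq_matI)
    fix i j assume "i < dim_row (hcat ?M1 ?M2)" "j < dim_col (hcat ?M1 ?M2)"
    then show "M $$ (i, j) = hcat ?M1 ?M2 $$ (i, j)"
      by (auto simp: index_hcat[OF M1 M2])
  qed (use assms in auto)
qed

lemma uminus_zero_mat[simp]: "- 0\<^sub>m nr nc = (0\<^sub>m nr nc :: 'a :: group_add mat)"
  by (rule eq_matI) auto

lemma dim_mat_diag[simp]: "dim_row (mat_diag n f) = n" "dim_col (mat_diag n f) = n"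
  by (simp_all add: mat_diag_def)

lemma transpose_mat_diag[simp]: "transpose_mat (mat_diag n f) = mat_diag n f"
  by (rule eq_matI) (auto simp: mat_diag_def)

lemma add_eq_0_mat_imp_eq_uminus:
  assumes M: "(M :: 'a :: group_add mat) \<in> carrier_mat nr nc" and N: "N \<in> carrier_mat nr nc"
    and sum: "M + N = 0\<^sub>m nr nc"
  shows "N = - M"
proof (rule eq_matI)
  fix i j assume ij: "i < dim_row (- M)" "j < dim_col (- M)"
  have "(M + N) $$ (i, j) = 0"
    using ij M by (simp add: sum)
  then show "N $$ (i, j) = (- M) $$ (i, j)"
    using minus_unique[of "M $$ (i, j)" "N $$ (i, j)"] ij M N by simp
qed (use M N in auto)

definition augmented :: "'a :: ring_1 mat \<Rightarrow> 'a mat" where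
  "augmented X = X @\<^sub>r (- 1\<^sub>m (dim_col X))"

lemma dim_augmented[simp]:
  "dim_row (augmented X) = dim_row X + dim_col X" "dim_col (augmented X) = dim_col X"
  by (simp_all add: augmented_def)

lemma augmented_carrier_mat[simp, intro]: "X \<in> carrier_mat nr nc \<Longrightarrow> augmented X \<in> carrier_mat (nr + nc) nc"
  unfolding augmented_def by auto

lemma hcat_mult_augmented:
  assumes M: "M \<in> carrier_mat nr nc1" and N: "N \<in> carrier_mat nr nc" and X: "X \<in> carrier_mat nc1 nc"
  shows "hcat M N * augmented X = M * X - N"
proof -
  have "augmented X = X @\<^sub>r (- 1\<^sub>m nc)"
    using X by (simp add: augmented_def)
  then have "hcat M N * augmented X = M * X + N * (- 1\<^sub>m nc)"
    using M N X by (simp add: hcat_mult_append_rows)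
  also have "\<dots> = M * X - N"
    using M N X by (intro eq_matI) auto
  finally show ?thesis .
qed

lemma hcat_mult_augmented_eq_0_iff:
  assumes "M \<in> carrier_mat nr nc1" "N \<in> carrier_mat nr nc" "X \<in> carrier_mat nc1 nc"
  shows "hcat M N * augmented X = 0\<^sub>m nr nc \<longleftrightarrow> M * X = N"
proof -
  have "M * X - N = 0\<^sub>m nr nc \<longleftrightarrow> M * X = N"
  proof
    assume "M * X - N = 0\<^sub>m nr nc"
    then have "(M * X - N) $$ (i, j) = 0" if "i < nr" "j < nc" for i j
      using that by simp
    then show "M * X = N"
      using assms by (intro eq_matI) auto
  next
    assume "M * X = N"
    then show "M * X - N = 0\<^sub>m nr nc"
      using assms by simp
  qed
  then show ?thesis using hcat_mult_augmented[OF assms] by simp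
qed

section \<open>Trace and Frobenius norm\<close>

definition trace :: "'a :: comm_monoid_add mat \<Rightarrow> 'a" where
  "trace M = (\<Sum>i<dim_row M. M $$ (i, i))"

lemma trace_mult_comm:
  assumes M: "(M :: 'a :: comm_semiring_0 mat) \<in> carrier_mat nr nc" and N: "N \<in> carrier_mat nc nr"
  shows "trace (M * N) = trace (N * M)"
proof -
  have "trace (M * N) = (\<Sum>i<nr. \<Sum>j<nc. M $$ (i, j) * N $$ (j, i))"
    using M N by (auto simp: trace_def scalar_prod_def atLeast0LessThan intro!: sum.cong)
  also have "\<dots> = (\<Sum>j<nc. \<Sum>i<nr. N $$ (j, i) * M $$ (i, j))"
    by (subst sum.swap) (simp add: mult.commute)
  also have "\<dots> = trace (N * M)"
    using M N by (auto simp: trace_def scalar_prod_def atLeast0LessThan intro!: sum.cong)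
  finally show ?thesis .
qed

lemma trace_add:
  assumes "dim_row M = dim_row N" "dim_col M = dim_col N" "dim_row M = dim_col M"
  shows "trace (M + N) = trace M + trace N"
proof -
  have "trace (M + N) = (\<Sum>i<dim_row M. M $$ (i, i) + N $$ (i, i))"
    unfolding trace_def using assms by (intro sum.cong) auto
  then show ?thesis
    using assms(1) by (simp add: trace_def sum.distrib)
qed

lemma trace_uminus:
  assumes "dim_row M = dim_col (M :: 'a :: ab_group_add mat)"
  shows "trace (- M) = - trace M"
proof -
  have "trace (- M) = (\<Sum>i<dim_row M. - M $$ (i, i))"
    unfolding trace_def using assms by (intro sum.cong) auto
  then show ?thesis
    by (simp add: trace_def sum_negf)
qed

lemma trace_one_mat: "trace (1\<^sub>m n :: 'a :: semiring_1 mat) = of_nat n"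
  by (simp add: trace_def)

lemma trace_mat_diag: "trace (mat_diag n f) = (\<Sum>i<n. f i)"
  by (simp add: trace_def mat_diag_def)

lemma trace_mult_transpose_self:
  fixes M :: "real mat"
  assumes M: "M \<in> carrier_mat nr nc"
  shows "trace (M * transpose_mat M) = (\<Sum>i<nr. \<Sum>j<nc. (M $$ (i, j))\<^sup>2)"
proof -
  have "(M * transpose_mat M) $$ (i, i) = (\<Sum>j<nc. (M $$ (i, j))\<^sup>2)" if "i < nr" for i
    using M that by (simp add: scalar_prod_def atLeast0LessThan power2_eq_square)
  then show ?thesis
    using M by (simp add: trace_def)
qed

lemma trace_mult_transpose_self_nonneg: "0 \<le> trace (M * transpose_mat M)" for M :: "real mat"
  unfolding trace_mult_transpose_self[OF carrier_matI[OF refl refl]] by (simp add: sum_nonneg)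

lemma fro_norm_nonneg: "0 \<le> fro_norm M"
  by (simp add: fro_norm_def sum_nonneg)

lemma fro_norm_sq: "(fro_norm M)\<^sup>2 = trace (M * transpose_mat M)"
  unfolding trace_mult_transpose_self[OF carrier_matI[OF refl refl]] fro_norm_def
  by (simp add: sum_nonneg)

section \<open>Orthonormal columns and orthogonal projections\<close>

lemma col_hcat:
  "M \<in> carrier_mat nr nc1 \<Longrightarrow> N \<in> carrier_mat nr nc2 \<Longrightarrow> j < nc1 + nc2 \<Longrightarrow>
   col (hcat M N) j = (if j < nc1 then col M j else col N (j - nc1))"
  by (auto simp: index_hcat intro!: eq_vecI)

lemma orthonormal_cols_hcat:
  assumes P: "P \<in> carrier_mat nr nc1" and R: "R \<in> carrier_mat nr nc2"
    and orth: "transpose_mat (hcat P R) * hcat P R = 1\<^sub>m (nc1 + nc2)"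
  shows "transpose_mat P * P = 1\<^sub>m nc1" "transpose_mat P * R = 0\<^sub>m nc1 nc2"
    "transpose_mat R * R = 1\<^sub>m nc2"
proof -
  have gram: "col (hcat P R) i \<bullet> col (hcat P R) j = (if i = j then 1 else 0)"
    if "i < nc1 + nc2" "j < nc1 + nc2" for i j
    using arg_cong[OF orth, of "\<lambda>M. M $$ (i, j)"] that P R by simp
  show "transpose_mat P * P = 1\<^sub>m nc1"
  proof (rule eq_matI)
    fix i j assume "i < dim_row (1\<^sub>m nc1 :: 'a mat)" "j < dim_col (1\<^sub>m nc1 :: 'a mat)"
    then show "(transpose_mat P * P) $$ (i, j) = 1\<^sub>m nc1 $$ (i, j)"
      using gram[of i j] P R by (simp add: col_hcat)
  qed (use P in auto)
  show "transpose_mat P * R = 0\<^sub>m nc1 nc2"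
  proof (rule eq_matI)
    fix i j assume "i < dim_row (0\<^sub>m nc1 nc2 :: 'a mat)" "j < dim_col (0\<^sub>m nc1 nc2 :: 'a mat)"
    then show "(transpose_mat P * R) $$ (i, j) = 0\<^sub>m nc1 nc2 $$ (i, j)"
      using gram[of i "nc1 + j"] P R by (simp add: col_hcat)
  qed (use P R in auto)
  show "transpose_mat R * R = 1\<^sub>m nc2"
  proof (rule eq_matI)
    fix i j assume "i < dim_row (1\<^sub>m nc2 :: 'a mat)" "j < dim_col (1\<^sub>m nc2 :: 'a mat)"
    then show "(transpose_mat R * R) $$ (i, j) = 1\<^sub>m nc2 $$ (i, j)"
      using gram[of "nc1 + i" "nc1 + j"] P R by (simp add: col_hcat)
  qed (use R in auto)
qed

lemma orthogonal_hcat_outer: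
  fixes P R :: "'a :: field mat"
  assumes P: "P \<in> carrier_mat nr nc1" and R: "R \<in> carrier_mat nr nc2" and nr: "nc1 + nc2 = nr"
    and orth: "transpose_mat (hcat P R) * hcat P R = 1\<^sub>m nr"
  shows "P * transpose_mat P + R * transpose_mat R = 1\<^sub>m nr"
proof -
  have H: "hcat P R \<in> carrier_mat nr nr"
    using P R nr by (metis hcat_carrier_mat)
  have "hcat P R * transpose_mat (hcat P R) = 1\<^sub>m nr"
    using mat_mult_left_right_inverse[OF transpose_carrier_mat[THEN iffD2, OF H] H] orth by simp
  moreover have "hcat P R * transpose_mat (hcat P R) = P * transpose_mat P + R * transpose_mat R"
    using P R by (simp add: transpose_hcat hcat_mult_append_rows)
  ultimately show ?thesis by simp
qed

lemma scalar_prod_self_eq_0: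
  fixes x :: "real vec"
  assumes "x \<bullet> x = 0"
  shows "x = 0\<^sub>v (dim_vec x)"
proof -
  have "(\<Sum>i<dim_vec x. (x $ i)\<^sup>2) = 0"
    using assms by (simp add: scalar_prod_def atLeast0LessThan power2_eq_square)
  then show ?thesis
    by (intro eq_vecI) (auto simp: sum_nonneg_eq_0_iff)
qed

lemma trace_mult_proj_le:
  fixes P N :: "real mat"
  assumes P: "P \<in> carrier_mat n n" and PP: "P * P = P" and PT: "transpose_mat P = P"
    and N: "N \<in> carrier_mat m n"
  shows "trace (N * (P * transpose_mat N)) \<le> trace (N * transpose_mat N)"
proof -
  define K where "K = N + - (N * P)"
  have PPX: "P * (P * X) = P * X" if "dim_row X = n" for X
    using that P PP by (metis assoc_mult_mat_dim carrier_matD)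
  have "trace (K * transpose_mat K) = trace (N * transpose_mat N) - trace (N * (P * transpose_mat N))"
    unfolding K_def using N P
    by (simp add: transpose_add_dim transpose_uminus transpose_mult_dim PT add_mult_distrib_mat_dim
        mult_add_distrib_mat_dim assoc_mult_mat_dim PPX trace_add trace_uminus)
  then show ?thesis
    using trace_mult_transpose_self_nonneg[of K] by linarith
qed

lemma proj_diag_eq_row_sum_sq:
  fixes P :: "real mat"
  assumes P: "P \<in> carrier_mat n n" and PP: "P * P = P" and PT: "transpose_mat P = P" and i: "i < n"
  shows "P $$ (i, i) = (\<Sum>j<n. (P $$ (i, j))\<^sup>2)"
proof -
  have "P $$ (i, i) = (P * P) $$ (i, i)"
    unfolding PP ..
  also have "\<dots> = (\<Sum>j<n. P $$ (i, j) * transpose_mat P $$ (i, j))"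
    using P i by (simp add: scalar_prod_def atLeast0LessThan)
  finally show ?thesis
    unfolding PT by (simp add: power2_eq_square)
qed

lemma proj_diag_bounds:
  fixes P :: "real mat"
  assumes "P \<in> carrier_mat n n" "P * P = P" "transpose_mat P = P" "i < n"
  shows "0 \<le> P $$ (i, i)" "P $$ (i, i) \<le> 1"
proof -
  have "(P $$ (i, i))\<^sup>2 \<le> (\<Sum>j<n. (P $$ (i, j))\<^sup>2)"
    using assms(4) by (intro member_le_sum) auto
  then have sq: "P $$ (i, i) * P $$ (i, i) \<le> P $$ (i, i)"
    using proj_diag_eq_row_sum_sq[OF assms] by (simp add: power2_eq_square)
  then show "0 \<le> P $$ (i, i)"
    using zero_le_square[of "P $$ (i, i)"] by linarith
  show "P $$ (i, i) \<le> 1"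
  proof (rule ccontr)
    assume "\<not> P $$ (i, i) \<le> 1"
    then have "P $$ (i, i) * 1 < P $$ (i, i) * P $$ (i, i)"
      by (intro mult_strict_left_mono) auto
    with sq show False by simp
  qed
qed

lemma proj_row_eq_0_if_diag_eq_0:
  fixes P :: "real mat"
  assumes "P \<in> carrier_mat n n" "P * P = P" "transpose_mat P = P" "i < n"
    and diag: "P $$ (i, i) = 0" and j: "j < n"
  shows "P $$ (i, j) = 0"
proof -
  have "(\<Sum>j<n. (P $$ (i, j))\<^sup>2) = 0"
    using proj_diag_eq_row_sum_sq[OF assms(1-4)] diag by simp
  then show ?thesis
    using j by (simp add: sum_nonneg_eq_0_iff)
qed

lemma trace_diag_mult_diag:
  assumes P: "(P :: real mat) \<in> carrier_mat n n"
  shows "trace (mat_diag n s * (P * mat_diag n s)) = (\<Sum>i<n. (s i)\<^sup>2 * P $$ (i, i))"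
  using P by (simp add: mat_diag_mult_right[OF P] mat_diag_mult_left[of _ n n] trace_def
      power2_eq_square mult_ac)

lemma gram_mat_invertible:
  fixes Y :: "real mat"
  assumes Y: "Y \<in> carrier_mat n d" and L: "L \<in> carrier_mat d n" and LY: "L * Y = 1\<^sub>m d"
  obtains G where "G \<in> carrier_mat d d" "G * (transpose_mat Y * Y) = 1\<^sub>m d"
    "(transpose_mat Y * Y) * G = 1\<^sub>m d" "transpose_mat G = G"
proof -
  let ?YY = "transpose_mat Y * Y"
  have YY: "?YY \<in> carrier_mat d d"
    using Y by simp
  have "det ?YY \<noteq> 0"
  proof
    assume "det ?YY = 0"
    then obtain v where v: "v \<in> carrier_vec d" "v \<noteq> 0\<^sub>v d" "?YY *\<^sub>v v = 0\<^sub>v d"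
      using det_0_iff_vec_prod_zero_field[OF YY] by blast
    have "(Y *\<^sub>v v) \<bullet> (Y *\<^sub>v v) = (transpose_mat Y *\<^sub>v (Y *\<^sub>v v)) \<bullet> v"
      by (rule transpose_vec_mult_scalar[OF Y v(1) mult_mat_vec_carrier[OF Y v(1)], symmetric])
    also have "\<dots> = (?YY *\<^sub>v v) \<bullet> v"
      using Y v by simp
    also have "\<dots> = 0"
      unfolding v(3) using v by simp
    finally have "(Y *\<^sub>v v) \<bullet> (Y *\<^sub>v v) = 0" .
    then have Yv: "Y *\<^sub>v v = 0\<^sub>v n"
      using Y scalar_prod_self_eq_0 by fastforce
    have "v = (L * Y) *\<^sub>v v"
      using LY v by simp
    also have "\<dots> = L *\<^sub>v (Y *\<^sub>v v)"
      by (rule assoc_mult_mat_vec[OF L Y v(1)])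
    also have "\<dots> = 0\<^sub>v d"
      unfolding Yv using L by (intro eq_vecI) auto
    finally show False
      using v(2) by simp
  qed
  then obtain G where G: "G \<in> carrier_mat d d" "G * ?YY = 1\<^sub>m d" "?YY * G = 1\<^sub>m d"
    using det_non_zero_imp_unit[OF YY, of "()"] unfolding Units_def ring_mat_simps by auto
  have YY_sym: "transpose_mat ?YY = ?YY"
    using Y by (simp add: transpose_mult)
  have "transpose_mat (?YY * G) = transpose_mat G * transpose_mat ?YY"
    by (rule transpose_mult[OF YY G(1)])
  then have GtYY: "transpose_mat G * ?YY = 1\<^sub>m d"
    using G(3) YY_sym by simp
  have "transpose_mat G = transpose_mat G * (?YY * G)"
    using G by simp
  also have "\<dots> = (transpose_mat G * ?YY) * G"
    using G YY by (simp add: assoc_mult_mat_dim)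
  finally have "transpose_mat G = G"
    using G GtYY by simp
  then show ?thesis
    by (rule that[OF G])
qed

lemma projection_onto_left_invertible:
  fixes Y :: "real mat"
  assumes Y: "Y \<in> carrier_mat n d" and L: "L \<in> carrier_mat d n" and LY: "L * Y = 1\<^sub>m d"
  obtains P K where "P \<in> carrier_mat n n" "K \<in> carrier_mat d n" "P = Y * K"
    "P * P = P" "transpose_mat P = P" "P * Y = Y" "trace P = real d"
proof -
  obtain G where G: "G \<in> carrier_mat d d" and GYY: "G * (transpose_mat Y * Y) = 1\<^sub>m d"
    and "(transpose_mat Y * Y) * G = 1\<^sub>m d" and GT: "transpose_mat G = G"
    by (rule gram_mat_invertible[OF Y L LY])
  define K where "K = G * transpose_mat Y"
  have K: "K \<in> carrier_mat d n"
    unfolding K_def using G Y by simp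
  have KY: "K * Y = 1\<^sub>m d"
    unfolding K_def using assoc_mult_mat[OF G _ Y, of "transpose_mat Y"] Y GYY by simp
  have "(Y * K) * (Y * K) = Y * ((K * Y) * K)"
    using Y K by (simp add: assoc_mult_mat_dim)
  then have idem: "(Y * K) * (Y * K) = Y * K"
    using K by (simp add: KY)
  have sym: "transpose_mat (Y * K) = Y * K"
    unfolding K_def using Y G by (simp add: transpose_mult_dim assoc_mult_mat_dim GT)
  have fix_Y: "(Y * K) * Y = Y"
    using Y K by (simp add: assoc_mult_mat_dim KY)
  have "trace (Y * K) = real d"
    using trace_mult_comm[OF Y K] KY by (simp add: trace_one_mat)
  then show ?thesis
    by (rule that[OF mult_carrier_mat[OF Y K] K refl idem sym fix_Y])
qed

text \<open>The scalar core of Ky Fan's minimum principle: below, \<open>h\<close> is the diagonal of an orthogonal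
  projection of rank \<open>r - k\<close>.\<close>

lemma weighted_sum_minus_tail_sum_ge:
  fixes s h :: "nat \<Rightarrow> real"
  assumes kr: "k < r"
    and mono: "\<And>i j. i \<le> j \<Longrightarrow> j < r \<Longrightarrow> s j \<le> s i"
    and h: "\<And>i. i < r \<Longrightarrow> 0 \<le> h i \<and> h i \<le> 1"
    and mass: "(\<Sum>i<r. h i) = real (r - k)"
    and c: "\<And>i. i < k \<Longrightarrow> c \<le> s i"
  shows "(c - s k) * (\<Sum>i<k. h i) \<le> (\<Sum>i<r. s i * h i) - (\<Sum>i\<in>{k..<r}. s i)"
proof -
  define a where "a = (\<Sum>i<k. h i)"
  have split: "(\<Sum>i<r. f i) = (\<Sum>i<k. f i) + (\<Sum>i\<in>{k..<r}. f i)" for f :: "nat \<Rightarrow> real"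
    using kr by (simp add: lessThan_atLeast0 sum.atLeastLessThan_concat)
  have missing_mass: "(\<Sum>i\<in>{k..<r}. 1 - h i) = a"
    using mass split[of h] unfolding a_def sum_subtractf by simp
  have "(\<Sum>i\<in>{k..<r}. s i * (1 - h i)) \<le> (\<Sum>i\<in>{k..<r}. s k * (1 - h i))"
    using h mono by (intro sum_mono mult_right_mono) auto
  also have "\<dots> = s k * a"
    by (simp add: missing_mass flip: sum_distrib_left)
  finally have tail: "(\<Sum>i\<in>{k..<r}. s i * (1 - h i)) \<le> s k * a" .
  have "c * a = (\<Sum>i<k. c * h i)"
    unfolding a_def by (simp add: sum_distrib_left)
  also have "\<dots> \<le> (\<Sum>i<k. s i * h i)"
    using h c kr by (intro sum_mono mult_right_mono) auto
  finally have head: "c * a \<le> (\<Sum>i<k. s i * h i)" .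
  have "(\<Sum>i<r. s i * h i) - (\<Sum>i\<in>{k..<r}. s i)
     = (\<Sum>i<k. s i * h i) - (\<Sum>i\<in>{k..<r}. s i * (1 - h i))"
    using split[of "\<lambda>i. s i * h i"] by (simp add: sum_subtractf right_diff_distrib)
  then show ?thesis
    using head tail unfolding a_def by (simp add: left_diff_distrib)
qed

lemma tail_sum_le_weighted_sum:
  fixes s h :: "nat \<Rightarrow> real"
  assumes "k < r" "\<And>i j. i \<le> j \<Longrightarrow> j < r \<Longrightarrow> s j \<le> s i"
    "\<And>i. i < r \<Longrightarrow> 0 \<le> h i \<and> h i \<le> 1" "(\<Sum>i<r. h i) = real (r - k)"
  shows "(\<Sum>i\<in>{k..<r}. s i) \<le> (\<Sum>i<r. s i * h i)"
  using weighted_sum_minus_tail_sum_ge[where k = k and r = r and s = s and h = h and c = "s k"] assms by simp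

lemma weighted_sum_le_tail_sum_imp_head_weights_0:
  fixes s h :: "nat \<Rightarrow> real"
  assumes "k < r" "\<And>i j. i \<le> j \<Longrightarrow> j < r \<Longrightarrow> s j \<le> s i"
    "\<And>i. i < r \<Longrightarrow> 0 \<le> h i \<and> h i \<le> 1" "(\<Sum>i<r. h i) = real (r - k)"
    and gap: "0 < k \<Longrightarrow> s k < s (k - 1)"
    and le: "(\<Sum>i<r. s i * h i) \<le> (\<Sum>i\<in>{k..<r}. s i)"
    and i: "i < k"
  shows "h i = 0"
proof -
  have "(s (k - 1) - s k) * (\<Sum>i<k. h i) \<le> 0"
    using weighted_sum_minus_tail_sum_ge[where k = k and r = r and s = s and h = h and c = "s (k - 1)"] assms(1-4) le i
    by fastforce
  then have "(\<Sum>i<k. h i) \<le> 0"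
    using gap i by (simp add: mult_le_0_iff)
  then have "(\<Sum>i<k. h i) = 0"
    using assms(1,3) by (intro antisym sum_nonneg) auto
  then show ?thesis
    using assms(1,3) i by (subst (asm) sum_nonneg_eq_0_iff) auto
qed

lemma colspace_subset_imp_factor:
  assumes M: "M \<in> carrier_mat nr nc" and N: "N \<in> carrier_mat nr nc'" and sub: "colspace M \<subseteq> colspace N"
  obtains T where "T \<in> carrier_mat nc' nc" "M = N * T"
proof -
  have "\<exists>x \<in> carrier_vec nc'. col M j = N *\<^sub>v x" if j: "j < nc" for j
  proof -
    have "col M j = M *\<^sub>v unit_vec nc j"
      using M j by (intro eq_vecI) auto
    moreover have "M *\<^sub>v unit_vec nc j \<in> colspace M"
      using M unfolding colspace_def by auto
    ultimately have "col M j \<in> colspace N"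
      using sub by auto
    then show ?thesis
      using N unfolding colspace_def by auto
  qed
  then obtain f where f: "\<And>j. j < nc \<Longrightarrow> f j \<in> carrier_vec nc' \<and> col M j = N *\<^sub>v f j"
    by metis
  define T where "T = mat nc' nc (\<lambda>(i, j). f j $ i)"
  have T: "T \<in> carrier_mat nc' nc"
    unfolding T_def by auto
  have "M = N * T"
  proof (rule eq_matI)
    fix i j assume "i < dim_row (N * T)" "j < dim_col (N * T)"
    then have ij: "i < nr" "j < nc"
      using N T by auto
    have "col T j = f j"
      using f[OF ij(2)] ij unfolding T_def by (intro eq_vecI) auto
    then have "(N * T) $$ (i, j) = (N *\<^sub>v f j) $ i"
      using ij N T by simp
    also have "\<dots> = M $$ (i, j)"
      using f[OF ij(2)] ij M by (metis carrier_matD(1) col_def index_vec)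
    finally show "M $$ (i, j) = (N * T) $$ (i, j)" by simp
  qed (use M N T in auto)
  then show ?thesis
    using that T by blast
qed

lemma orthogonal_complement_null_space:
  fixes M Q1 Q2 :: "real mat"
  assumes M: "M \<in> carrier_mat p m" and Q1: "Q1 \<in> carrier_mat m p'" and Q2: "Q2 \<in> carrier_mat m r"
    and Q1Q2: "transpose_mat Q1 * Q2 = 0\<^sub>m p' r"
    and outer: "Q1 * transpose_mat Q1 + Q2 * transpose_mat Q2 = 1\<^sub>m m"
    and span: "colspace Q1 = colspace (transpose_mat M)"
  shows "M * Q2 = 0\<^sub>m p r"
    and "Z \<in> carrier_mat m c \<Longrightarrow> M * Z = 0\<^sub>m p c \<Longrightarrow> Q2 * (transpose_mat Q2 * Z) = Z"
proof -
  have Mt: "transpose_mat M \<in> carrier_mat m p"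
    using M by simp
  obtain S where S: "S \<in> carrier_mat p' p" and Mt_eq: "transpose_mat M = Q1 * S"
    using colspace_subset_imp_factor[OF Mt Q1] span by auto
  have "M = transpose_mat S * transpose_mat Q1"
    using transpose_mult[OF Q1 S] Mt_eq by (metis transpose_transpose)
  then show "M * Q2 = 0\<^sub>m p r"
    using S Q1 Q2 by (simp add: assoc_mult_mat_dim Q1Q2)
  obtain T where T: "T \<in> carrier_mat p p'" and Q1_eq: "Q1 = transpose_mat M * T"
    using colspace_subset_imp_factor[OF Q1 Mt] span by auto
  assume Z: "Z \<in> carrier_mat m c" and MZ: "M * Z = 0\<^sub>m p c"
  have "transpose_mat Q1 = transpose_mat T * M"
    using transpose_mult[OF Mt T] Q1_eq by simp
  then have Q1Z: "transpose_mat Q1 * Z = 0\<^sub>m p' c"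
    using T M Z by (simp add: assoc_mult_mat_dim MZ)
  have "Z = (Q1 * transpose_mat Q1 + Q2 * transpose_mat Q2) * Z"
    using Z by (simp add: outer)
  also have "\<dots> = Q1 * (transpose_mat Q1 * Z) + Q2 * (transpose_mat Q2 * Z)"
    using Q1 Q2 Z by (simp add: add_mult_distrib_mat_dim assoc_mult_mat_dim)
  finally show "Q2 * (transpose_mat Q2 * Z) = Z"
    using Q1 Q2 Z by (simp add: Q1Z)
qed

lemma invertible_mat_the_mat_inverse:
  fixes M :: "'a :: field mat"
  assumes M: "M \<in> carrier_mat n n" and inv: "invertible_mat M"
  shows "M * the (mat_inverse M) = 1\<^sub>m n" "the (mat_inverse M) * M = 1\<^sub>m n"
    "the (mat_inverse M) \<in> carrier_mat n n"
proof -
  obtain N where N: "M * N = 1\<^sub>m n" "N * M = 1\<^sub>m (dim_row N)"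
    using inv M unfolding invertible_mat_def inverts_mat_def by auto
  have "N \<in> carrier_mat n n"
    using arg_cong[OF N(1), of dim_col] arg_cong[OF N(2), of dim_col] M by auto
  then have "M \<in> Units (ring_mat TYPE('a) n ())"
    using M N unfolding Units_def ring_mat_simps by auto
  then obtain N' where "mat_inverse M = Some N'"
    using mat_inverse(1)[OF M] by fastforce
  then show "M * the (mat_inverse M) = 1\<^sub>m n" "the (mat_inverse M) * M = 1\<^sub>m n"
    "the (mat_inverse M) \<in> carrier_mat n n"
    using mat_inverse(2)[OF M] by auto
qed

section \<open>The TLSE problem\<close>

lemma tlse_solution_iff_eq_if_sharp_bound:
  assumes feasible0: "tlse_feasible A B C D E0 F0 X0"
    and bound: "\<And>E F X. tlse_feasible A B C D E F X \<Longrightarrow>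
      fro_norm (hcat E0 F0) \<le> fro_norm (hcat E F) \<and>
      (fro_norm (hcat E F) \<le> fro_norm (hcat E0 F0) \<longrightarrow> X = X0)"
  shows "tlse_solution A B C D X \<longleftrightarrow> X = X0"
proof
  have "tlse_minimizer A B C D E0 F0"
    unfolding tlse_minimizer_def using feasible0 bound by blast
  then show "X = X0 \<Longrightarrow> tlse_solution A B C D X"
    unfolding tlse_solution_def using feasible0 by blast
  assume "tlse_solution A B C D X"
  then obtain E F where min: "tlse_minimizer A B C D E F" and feasible: "tlse_feasible A B C D E F X"
    unfolding tlse_solution_def by blast
  have "fro_norm (hcat E F) \<le> fro_norm (hcat E0 F0)"
    using min feasible0 unfolding tlse_minimizer_def by blast
  then show "X = X0"
    using bound[OF feasible] by simp
qed

text \<open>The paper's \<open>k = n - p\<close> and \<open>n + d - p\<close> enter as parameters \<open>k\<close> and \<open>r\<close> tied by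
  \<open>n = p + k\<close> and \<open>r = k + d\<close>, which keeps truncated subtraction out of the development.\<close>

locale tlse_svd =
  fixes p q n d k r :: nat
    and A B C D Q1 Q2 U1 U2 V1 V2 V11 V21 V12 V22 :: "real mat"
    and \<sigma> :: "nat \<Rightarrow> real"
  assumes n_eq: "n = p + k" and r_eq: "r = k + d" and d_pos: "0 < d"
    and A: "A \<in> carrier_mat q n" and B: "B \<in> carrier_mat q d"
    and C: "C \<in> carrier_mat p n" and D: "D \<in> carrier_mat p d"
    and Q1: "Q1 \<in> carrier_mat (n + d) p" and Q2: "Q2 \<in> carrier_mat (n + d) r"
    and Q_orth: "orthogonal_of_order (n + d) (hcat Q1 Q2)"
    and Q1_span: "colspace Q1 = colspace (transpose_mat (hcat C D))"
    and U1: "U1 \<in> carrier_mat q k" and U2: "U2 \<in> carrier_mat q d"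
    and U_orth: "orthonormal_cols (hcat U1 U2)"
    and V1: "V1 \<in> carrier_mat r k" and V2: "V2 \<in> carrier_mat r d"
    and V_orth: "orthogonal_of_order r (hcat V1 V2)"
    and \<sigma>_mono: "\<And>i j. i \<le> j \<Longrightarrow> j < r \<Longrightarrow> \<sigma> j \<le> \<sigma> i"
    and \<sigma>_nonneg: "\<And>i. i < r \<Longrightarrow> 0 \<le> \<sigma> i"
    and svd: "hcat A B * Q2 = hcat U1 U2 * mat_diag r \<sigma> * transpose_mat (hcat V1 V2)"
    and V11: "V11 \<in> carrier_mat n k" and V21: "V21 \<in> carrier_mat d k"
    and V12: "V12 \<in> carrier_mat n d" and V22: "V22 \<in> carrier_mat d d"
    and Q2_V1: "Q2 * V1 = V11 @\<^sub>r V21" and Q2_V2: "Q2 * V2 = V12 @\<^sub>r V22"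
    and gap: "0 < k \<Longrightarrow> \<sigma> (k - 1) > \<sigma> k"
    and V22_invertible: "invertible_mat V22"
begin

abbreviation "U \<equiv> hcat U1 U2"
abbreviation "V \<equiv> hcat V1 V2"
abbreviation "\<Sigma> \<equiv> mat_diag r \<sigma>"
abbreviation "V22_inv \<equiv> the (mat_inverse V22)"

definition "Xn = - (V12 * V22_inv)"
definition "Ahat = U1 * mat_diag k \<sigma> * transpose_mat V11"
definition "Bhat = U1 * mat_diag k \<sigma> * transpose_mat V21"
definition "tail = (\<Sum>i\<in>{k..<r}. (\<sigma> i)\<^sup>2)"

lemma k_lt_r: "k < r" and p_plus_r: "p + r = n + d"
  using n_eq r_eq d_pos by auto

lemma k_plus_d[simp]: "k + d = r" and r_minus_k[simp]: "r - k = d"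
  using r_eq by simp_all

lemmas carriers[simp] = A B C D Q1 Q2 U1 U2 V1 V2 V11 V21 V12 V22

lemmas carrier_dims[simp] =
  carrier_matD[OF A] carrier_matD[OF B] carrier_matD[OF C] carrier_matD[OF D]
  carrier_matD[OF Q1] carrier_matD[OF Q2] carrier_matD[OF U1] carrier_matD[OF U2]
  carrier_matD[OF V1] carrier_matD[OF V2] carrier_matD[OF V11] carrier_matD[OF V21]
  carrier_matD[OF V12] carrier_matD[OF V22]

lemma V22_inv: "V22 * V22_inv = 1\<^sub>m d" "V22_inv * V22 = 1\<^sub>m d" "V22_inv \<in> carrier_mat d d"
  using invertible_mat_the_mat_inverse[OF V22 V22_invertible] by auto

lemma V22_inv_dims[simp]: "dim_row V22_inv = d" "dim_col V22_inv = d"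
  using V22_inv(3) by auto

lemma Xn_carrier: "Xn \<in> carrier_mat n d"
  unfolding Xn_def using V22_inv(3) by auto

lemma Q_orth_blocks:
  "transpose_mat Q1 * Q2 = 0\<^sub>m p r" "transpose_mat Q2 * Q2 = 1\<^sub>m r"
  "Q1 * transpose_mat Q1 + Q2 * transpose_mat Q2 = 1\<^sub>m (n + d)"
proof -
  have orth: "transpose_mat (hcat Q1 Q2) * hcat Q1 Q2 = 1\<^sub>m (p + r)"
    using Q_orth p_plus_r unfolding orthogonal_of_order_def by simp
  show "transpose_mat Q1 * Q2 = 0\<^sub>m p r" "transpose_mat Q2 * Q2 = 1\<^sub>m r"
    using orthonormal_cols_hcat[OF Q1 Q2 orth] by auto
  show "Q1 * transpose_mat Q1 + Q2 * transpose_mat Q2 = 1\<^sub>m (n + d)"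
    using orthogonal_hcat_outer[OF Q1 Q2 p_plus_r] orth p_plus_r by simp
qed

lemma U_orth_blocks: "transpose_mat U1 * U1 = 1\<^sub>m k" "transpose_mat U * U = 1\<^sub>m r"
proof -
  have orth: "transpose_mat U * U = 1\<^sub>m (k + d)"
    using U_orth unfolding orthonormal_cols_def by simp
  then show "transpose_mat U1 * U1 = 1\<^sub>m k"
    using orthonormal_cols_hcat[OF U1 U2] by auto
  show "transpose_mat U * U = 1\<^sub>m r"
    using orth by simp
qed

lemma V_orth_blocks:
  "transpose_mat V1 * V2 = 0\<^sub>m k d" "transpose_mat V2 * V2 = 1\<^sub>m d"
  "transpose_mat V * V = 1\<^sub>m r" "V * transpose_mat V = 1\<^sub>m r"
proof -
  have orth: "transpose_mat V * V = 1\<^sub>m (k + d)"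
    using V_orth unfolding orthogonal_of_order_def by simp
  then show "transpose_mat V1 * V2 = 0\<^sub>m k d" "transpose_mat V2 * V2 = 1\<^sub>m d"
    using orthonormal_cols_hcat[OF V1 V2] by auto
  show "transpose_mat V * V = 1\<^sub>m r"
    using orth by simp
  have "V * transpose_mat V = V1 * transpose_mat V1 + V2 * transpose_mat V2"
    unfolding transpose_hcat[OF V1 V2] by (rule hcat_mult_append_rows[OF V1 V2, of _ r]) simp_all
  then show "V * transpose_mat V = 1\<^sub>m r"
    using orthogonal_hcat_outer[OF V1 V2 k_plus_d] orth by simp
qed

lemma orthonormal_cancel[simp]:
  "dim_row X = r \<Longrightarrow> transpose_mat Q2 * (Q2 * X) = X"
  "dim_row X = r \<Longrightarrow> transpose_mat V * (V * X) = X"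
  "dim_row X = r \<Longrightarrow> V * (transpose_mat V * X) = X"
  "dim_row X = r \<Longrightarrow> transpose_mat U * (U * X) = X"
  "dim_row X = k \<Longrightarrow> transpose_mat U1 * (U1 * X) = X"
  by (rule mult_left_cancel_one[OF Q_orth_blocks(2)] mult_left_cancel_one[OF V_orth_blocks(3)]
      mult_left_cancel_one[OF V_orth_blocks(4)] mult_left_cancel_one[OF U_orth_blocks(2)]
      mult_left_cancel_one[OF U_orth_blocks(1)]; simp)+

lemma CD_mult_Q2: "hcat C D * Q2 = 0\<^sub>m p r"
  and Q2_Q2t_fixes_null_space: "Z \<in> carrier_mat (n + d) c \<Longrightarrow> hcat C D * Z = 0\<^sub>m p c \<Longrightarrow> Q2 * (transpose_mat Q2 * Z) = Z"
  using orthogonal_complement_null_space[OF hcat_carrier_mat[OF C D] Q1 Q2 Q_orth_blocks(1,3)]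
    Q1_span n_eq by auto

lemma constraint_iff_augmented:
  "X \<in> carrier_mat n d \<Longrightarrow> C * X = D \<longleftrightarrow> hcat C D * augmented X = 0\<^sub>m p d"
  using hcat_mult_augmented_eq_0_iff[OF C D] by simp

lemma augmented_Xn: "augmented Xn = Q2 * (V2 * - V22_inv)"
proof -
  have "Q2 * (V2 * - V22_inv) = (V12 @\<^sub>r V22) * - V22_inv"
    by (simp flip: Q2_V2 add: assoc_mult_mat_dim)
  also have "\<dots> = (V12 * - V22_inv) @\<^sub>r (V22 * - V22_inv)"
    using V22_inv(3) by (intro append_rows_mult[OF V12 V22]) simp
  also have "\<dots> = Xn @\<^sub>r (- 1\<^sub>m d)"
    using V22_inv by (simp add: Xn_def)
  finally show ?thesis
    using Xn_carrier by (simp add: augmented_def)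
qed

lemma C_mult_Xn: "C * Xn = D"
proof -
  have "hcat C D * augmented Xn = (hcat C D * Q2) * (V2 * - V22_inv)"
    unfolding augmented_Xn by (simp add: assoc_mult_mat_dim)
  then show ?thesis
    using constraint_iff_augmented[OF Xn_carrier] by (simp add: CD_mult_Q2)
qed

text \<open>Without its \<open>V\<^sub>1\<close>-component, \<open>[X; -I] = Q\<^sub>2 V\<^sub>2 G\<close>, and the bottom block
  \<open>-I = V\<^sub>2\<^sub>2 G\<close> forces \<open>G = -V\<^sub>2\<^sub>2\<^sup>-\<^sup>1\<close>.\<close>

lemma eq_Xn_if_V1_component_0:
  assumes X: "X \<in> carrier_mat n d" and CX: "C * X = D"
    and V1_component: "transpose_mat V1 * (transpose_mat Q2 * augmented X) = 0\<^sub>m k d"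
  shows "X = Xn"
proof -
  define W where "W = transpose_mat Q2 * augmented X"
  define G where "G = transpose_mat V2 * W"
  have Z: "augmented X \<in> carrier_mat (n + d) d"
    using X by simp
  then have W: "W \<in> carrier_mat r d" and G: "G \<in> carrier_mat d d"
    using carrier_matD[OF X] by (auto simp: W_def G_def intro!: carrier_matI)
  have "augmented X = Q2 * W"
    using Q2_Q2t_fixes_null_space[OF Z] CX constraint_iff_augmented[OF X] unfolding W_def by simp
  also have "W = V * (transpose_mat V * W)"
    using W by simp
  also have "transpose_mat V * W = transpose_mat V1 * W @\<^sub>r G"
    using W by (simp add: G_def transpose_hcat[OF V1 V2] append_rows_mult[of _ k r _ d _ d])
  also have "V * (transpose_mat V1 * W @\<^sub>r G) = V1 * 0\<^sub>m k d + V2 * G"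
    unfolding V1_component[folded W_def] using G by (intro hcat_mult_append_rows[OF V1 V2]) auto
  also have "\<dots> = V2 * G"
    using mult_carrier_mat[OF V2 G] by simp
  also have "Q2 * (V2 * G) = (V12 * G) @\<^sub>r (V22 * G)"
    using G by (simp add: assoc_mult_mat_dim[symmetric] Q2_V2 append_rows_mult[of _ n d _ d _ d])
  finally have eq: "X @\<^sub>r (- 1\<^sub>m d) = (V12 * G) @\<^sub>r (V22 * G)"
    using X by (simp add: augmented_def)
  have X_eq: "X = V12 * G" and G_eq: "- 1\<^sub>m d = V22 * G"
    using append_rows_inject[OF X _ mult_carrier_mat[OF V12 G] mult_carrier_mat[OF V22 G] eq] by auto
  have "G = V22_inv * (V22 * G)"
    by (rule mult_left_cancel_one[OF V22_inv(2), symmetric]) (use G in simp_all)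
  then have "G = - V22_inv"
    using G_eq[symmetric] by simp
  then show ?thesis
    unfolding X_eq Xn_def by simp
qed

definition "Sigma_tail = mat_diag r (\<lambda>i. if k \<le> i then \<sigma> i else 0)"
definition "Delta0 = - (U * (Sigma_tail * (transpose_mat V * transpose_mat Q2)))"

lemma Vt_mult_V2: "transpose_mat V * V2 = 0\<^sub>m k d @\<^sub>r 1\<^sub>m d"
proof -
  have "transpose_mat V * V2 = (transpose_mat V1 * V2) @\<^sub>r (transpose_mat V2 * V2)"
    by (simp add: transpose_hcat[OF V1 V2] append_rows_mult[of _ k r _ d _ d])
  then show ?thesis
    by (simp add: V_orth_blocks)
qed

lemma Sigma_mult_Vt_V2: "\<Sigma> * (transpose_mat V * V2) = Sigma_tail * (transpose_mat V * V2)"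
proof -
  have S: "0\<^sub>m k d @\<^sub>r 1\<^sub>m d \<in> carrier_mat r d"
    using carrier_append_rows[of "0\<^sub>m k d" k d "1\<^sub>m d" d] by simp
  show ?thesis
    unfolding Vt_mult_V2 Sigma_tail_def mat_diag_mult_left[OF S]
    by (intro eq_matI) (auto simp: index_append_rows[of _ k d _ d])
qed

lemma AB_mult_Q2_V:
  assumes Y: "dim_row Y = r"
  shows "hcat A B * (Q2 * (V * Y)) = U * (\<Sigma> * Y)"
proof -
  have "hcat A B * (Q2 * (V * Y)) = (U * \<Sigma> * transpose_mat V) * (V * Y)"
    using Y by (simp flip: svd add: assoc_mult_mat_dim)
  also have "\<dots> = U * (\<Sigma> * (transpose_mat V * (V * Y)))"
    using Y by (simp add: assoc_mult_mat_dim)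
  finally show ?thesis
    using Y by simp
qed

lemma Delta0_carrier: "Delta0 \<in> carrier_mat q (n + d)"
  unfolding Delta0_def Sigma_tail_def by (auto intro!: carrier_matI)

lemma AB_plus_Delta0_mult_augmented_Xn: "(hcat A B + Delta0) * augmented Xn = 0\<^sub>m q d"
proof -
  define N where "N = - V22_inv"
  define G where "G = transpose_mat V * (V2 * N)"
  have N: "N \<in> carrier_mat d d"
    using V22_inv(3) by (simp add: N_def)
  then have G: "G \<in> carrier_mat r d"
    by (auto simp: G_def)
  have Z: "augmented Xn = Q2 * (V * G)"
    unfolding augmented_Xn G_def N_def[symmetric] using N by simp
  have "hcat A B * augmented Xn = U * (\<Sigma> * G)"
    unfolding Z using G by (simp add: AB_mult_Q2_V)
  also have "\<Sigma> * G = \<Sigma> * (transpose_mat V * V2) * N"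
    using N by (simp add: G_def assoc_mult_mat_dim)
  also have "\<dots> = Sigma_tail * (transpose_mat V * V2) * N"
    by (simp only: Sigma_mult_Vt_V2)
  also have "\<dots> = Sigma_tail * G"
    using N by (simp add: G_def assoc_mult_mat_dim Sigma_tail_def)
  finally have "hcat A B * augmented Xn = U * (Sigma_tail * G)" .
  moreover have "Delta0 * augmented Xn = - (U * (Sigma_tail * G))"
    unfolding Z Delta0_def using G by (simp add: assoc_mult_mat_dim Sigma_tail_def)
  moreover have "(hcat A B + Delta0) * augmented Xn = hcat A B * augmented Xn + Delta0 * augmented Xn"
    using Delta0_carrier Xn_carrier by (intro add_mult_distrib_mat[of _ q "n + d"]) auto
  moreover have "U * (Sigma_tail * G) \<in> carrier_mat q d"
    using G by (intro carrier_matI) (simp_all add: Sigma_tail_def)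
  ultimately show ?thesis
    by (auto intro!: eq_matI)
qed

lemma fro_norm_sq_Delta0: "(fro_norm Delta0)\<^sup>2 = tail"
proof -
  let ?S = "mat_diag r (\<lambda>i. if k \<le> i then \<sigma> i else 0)"
  define K where "K = U * (?S * (transpose_mat V * transpose_mat Q2))"
  have "Delta0 * transpose_mat Delta0 = K * transpose_mat K"
    unfolding Delta0_def Sigma_tail_def K_def[symmetric] transpose_uminus by (simp add: K_def)
  also have "\<dots> = U * (?S * (?S * transpose_mat U))"
    unfolding K_def by (simp add: transpose_mult_dim assoc_mult_mat_dim)
  finally have DD: "Delta0 * transpose_mat Delta0 = U * (?S * (?S * transpose_mat U))" .
  have "(fro_norm Delta0)\<^sup>2 = trace ((?S * (?S * transpose_mat U)) * U)"
    unfolding fro_norm_sq DD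
    by (intro trace_mult_comm[of U q r]) (auto intro!: carrier_matI)
  also have "\<dots> = trace (mat_diag r (\<lambda>i. (if k \<le> i then \<sigma> i else 0)\<^sup>2))"
    by (simp add: assoc_mult_mat_dim U_orth_blocks power2_eq_square)
  also have "\<dots> = (\<Sum>i<r. if k \<le> i then (\<sigma> i)\<^sup>2 else 0)"
    by (auto simp: trace_mat_diag intro!: sum.cong)
  also have "\<dots> = (\<Sum>i\<in>{i \<in> {..<r}. k \<le> i}. (\<sigma> i)\<^sup>2)"
    by (rule sum.inter_filter[symmetric]) simp
  also have "{i \<in> {..<r}. k \<le> i} = {k..<r}"
    by auto
  finally show ?thesis
    unfolding tail_def .
qed

lemma optimal_perturbation:
  obtains E0 F0 where "tlse_feasible A B C D E0 F0 Xn" "fro_norm (hcat E0 F0) = sqrt tail"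
proof -
  obtain E0 F0 where E0: "E0 \<in> carrier_mat q n" and F0: "F0 \<in> carrier_mat q d"
    and Delta0: "Delta0 = hcat E0 F0"
    using hcat_split[OF Delta0_carrier] by blast
  have "hcat (A + E0) (B + F0) * augmented Xn = 0\<^sub>m q d"
    using AB_plus_Delta0_mult_augmented_Xn by (simp add: Delta0 add_hcat[OF A B E0 F0])
  then have "(A + E0) * Xn = B + F0"
    using hcat_mult_augmented_eq_0_iff[of "A + E0" q n "B + F0" d Xn] E0 F0 Xn_carrier by simp
  then have "tlse_feasible A B C D E0 F0 Xn"
    using E0 F0 Xn_carrier C_mult_Xn unfolding tlse_feasible_def by simp
  moreover have "fro_norm (hcat E0 F0) = sqrt tail"
    using fro_norm_sq_Delta0 fro_norm_nonneg[of Delta0] Delta0 by (metis real_sqrt_unique)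
  ultimately show ?thesis
    using that by blast
qed

definition "null_coords X = transpose_mat V * (transpose_mat Q2 * augmented X)"

lemma null_coords_carrier: "X \<in> carrier_mat n d \<Longrightarrow> null_coords X \<in> carrier_mat r d"
  unfolding null_coords_def by (intro carrier_matI) (simp_all add: carrier_matD)

lemma Q2_V_null_coords:
  assumes X: "X \<in> carrier_mat n d" and CX: "C * X = D"
  shows "Q2 * (V * null_coords X) = augmented X"
proof -
  have Z: "augmented X \<in> carrier_mat (n + d) d"
    using X by simp
  then have "V * null_coords X = transpose_mat Q2 * augmented X"
    unfolding null_coords_def by simp
  then show ?thesis
    using Q2_Q2t_fixes_null_space[OF Z] CX constraint_iff_augmented[OF X] by simp
qed

lemma null_coords_left_inverse:
  assumes X: "X \<in> carrier_mat n d" and CX: "C * X = D"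
  shows "(hcat (0\<^sub>m d n) (- 1\<^sub>m d) * (Q2 * V)) * null_coords X = 1\<^sub>m d"
proof -
  have "(hcat (0\<^sub>m d n) (- 1\<^sub>m d) * (Q2 * V)) * null_coords X = hcat (0\<^sub>m d n) (- 1\<^sub>m d) * augmented X"
    using X null_coords_carrier[OF X] by (simp add: assoc_mult_mat_dim Q2_V_null_coords[OF X CX])
  also have "\<dots> = 0\<^sub>m d n * X - (- 1\<^sub>m d)"
    by (rule hcat_mult_augmented) (use X in auto)
  also have "\<dots> = 1\<^sub>m d"
    using X by (intro eq_matI) auto
  finally show ?thesis .
qed

text \<open>Feasibility says \<open>([A B] + [E F]) [X; -I] = 0\<close>, and \<open>[A B] Q\<^sub>2 V = U \<Sigma>\<close> by the SVD.\<close>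

lemma perturbation_mult_null_coords:
  assumes feasible: "tlse_feasible A B C D E F X"
  shows "(hcat E F * (Q2 * V)) * null_coords X = - (U * (\<Sigma> * null_coords X))"
proof -
  have E: "E \<in> carrier_mat q n" and F: "F \<in> carrier_mat q d" and X: "X \<in> carrier_mat n d"
    and eq: "(A + E) * X = B + F" and CX: "C * X = D"
    using feasible unfolding tlse_feasible_def by auto
  define Y where "Y = null_coords X"
  have Y: "Y \<in> carrier_mat r d"
    unfolding Y_def using null_coords_carrier[OF X] .
  have Z: "augmented X = Q2 * (V * Y)"
    unfolding Y_def using Q2_V_null_coords[OF X CX] by simp
  have "hcat (A + E) (B + F) * augmented X = 0\<^sub>m q d"
    using hcat_mult_augmented_eq_0_iff[of "A + E" q n "B + F" d X] E F X eq by simp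
  moreover have "hcat (A + E) (B + F) * augmented X = hcat A B * augmented X + hcat E F * augmented X"
    unfolding add_hcat[OF A B E F, symmetric]
    by (rule add_mult_distrib_mat[OF hcat_carrier_mat[OF A B] hcat_carrier_mat[OF E F] augmented_carrier_mat[OF X]])
  moreover have "hcat A B * augmented X = U * (\<Sigma> * Y)"
    unfolding Z using Y by (simp add: AB_mult_Q2_V)
  moreover have "hcat E F * augmented X = (hcat E F * (Q2 * V)) * Y"
    unfolding Z using E F Y by (simp add: assoc_mult_mat_dim)
  ultimately have sum: "U * (\<Sigma> * Y) + (hcat E F * (Q2 * V)) * Y = 0\<^sub>m q d"
    by simp
  have "U * (\<Sigma> * Y) \<in> carrier_mat q d" "(hcat E F * (Q2 * V)) * Y \<in> carrier_mat q d"
    using E F Y by (auto intro!: carrier_matI)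
  from add_eq_0_mat_imp_eq_uminus[OF this sum] show ?thesis
    unfolding Y_def .
qed

lemma fro_norm_sq_ge_null_part:
  assumes Delta: "Delta \<in> carrier_mat q (n + d)"
  shows "trace ((Delta * (Q2 * V)) * transpose_mat (Delta * (Q2 * V))) \<le> (fro_norm Delta)\<^sup>2"
proof -
  define W where "W = Q2 * V"
  have W: "W \<in> carrier_mat (n + d) r"
    unfolding W_def by (auto intro!: carrier_matI)
  have WtW: "transpose_mat W * W = 1\<^sub>m r"
    unfolding W_def by (simp add: transpose_mult_dim assoc_mult_mat_dim V_orth_blocks)
  define R where "R = W * transpose_mat W"
  have R: "R \<in> carrier_mat (n + d) (n + d)"
    using W by (simp add: R_def)
  have "R * R = R"
    using W by (simp add: R_def assoc_mult_mat_dim mult_left_cancel_one[OF WtW])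
  moreover have "transpose_mat R = R"
    using W by (simp add: R_def transpose_mult_dim)
  ultimately have "trace (Delta * (R * transpose_mat Delta)) \<le> trace (Delta * transpose_mat Delta)"
    using trace_mult_proj_le[OF R _ _ Delta] by blast
  moreover have "Delta * (R * transpose_mat Delta) = (Delta * W) * transpose_mat (Delta * W)"
    using Delta W by (simp add: R_def transpose_mult_dim assoc_mult_mat_dim)
  ultimately show ?thesis
    unfolding fro_norm_sq W_def by simp
qed

text \<open>On the range of \<open>null_coords X\<close> the perturbation acts as \<open>-U \<Sigma>\<close>, so it drops out of the
  bound.\<close>

lemma weighted_diag_le_fro_norm_sq:
  assumes feasible: "tlse_feasible A B C D E F X"
    and P: "P \<in> carrier_mat r r" and PP: "P * P = P" and PT: "transpose_mat P = P"
    and K: "K \<in> carrier_mat d r" and P_eq: "P = null_coords X * K"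
  shows "(\<Sum>i<r. (\<sigma> i)\<^sup>2 * P $$ (i, i)) \<le> (fro_norm (hcat E F))\<^sup>2"
proof -
  have E: "E \<in> carrier_mat q n" and F: "F \<in> carrier_mat q d" and X: "X \<in> carrier_mat n d"
    using feasible unfolding tlse_feasible_def by auto
  define N where "N = hcat E F * (Q2 * V)"
  define Y where "Y = null_coords X"
  define M where "M = U * (\<Sigma> * P)"
  have N: "N \<in> carrier_mat q r"
    using E F by (auto simp: N_def intro!: carrier_matI)
  have Y: "Y \<in> carrier_mat r d"
    unfolding Y_def using null_coords_carrier[OF X] .
  have U: "U \<in> carrier_mat q r" and S: "\<Sigma> \<in> carrier_mat r r"
    using hcat_carrier_mat[OF U1 U2] by simp_all
  have M: "M \<in> carrier_mat q r"
    unfolding M_def using mult_carrier_mat[OF U mult_carrier_mat[OF S P]] .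
  have "N * P = (N * Y) * K"
    unfolding P_eq Y_def[symmetric] by (rule assoc_mult_mat[OF N Y K, symmetric])
  also have "N * Y = - (U * (\<Sigma> * Y))"
    using perturbation_mult_null_coords[OF feasible] by (simp add: N_def Y_def)
  also have "- (U * (\<Sigma> * Y)) * K = - M"
    unfolding M_def P_eq Y_def[symmetric] using U S Y K by (simp add: assoc_mult_mat_dim)
  finally have NP: "N * P = - M" .
  have "N * (P * transpose_mat N) = N * ((P * P) * transpose_mat N)"
    unfolding PP ..
  also have "\<dots> = (N * P) * (transpose_mat P * transpose_mat N)"
    unfolding PT using N P by (simp add: assoc_mult_mat_dim)
  also have "\<dots> = M * transpose_mat M"
    using N P M by (simp add: NP transpose_mult[OF N P, symmetric] transpose_uminus)
  also have "\<dots> = U * (\<Sigma> * ((P * P) * (\<Sigma> * transpose_mat U)))"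
    unfolding M_def using U S P by (simp add: transpose_mult_dim PT assoc_mult_mat_dim)
  also have "\<dots> = U * (\<Sigma> * (P * (\<Sigma> * transpose_mat U)))"
    unfolding PP ..
  finally have NPN: "N * (P * transpose_mat N) = U * (\<Sigma> * (P * (\<Sigma> * transpose_mat U)))" .
  have "trace (N * (P * transpose_mat N)) = trace ((\<Sigma> * (P * (\<Sigma> * transpose_mat U))) * U)"
    unfolding NPN by (intro trace_mult_comm[OF U] carrier_matI) simp_all
  also have "(\<Sigma> * (P * (\<Sigma> * transpose_mat U))) * U = \<Sigma> * (P * \<Sigma>)"
    using U S P by (simp add: assoc_mult_mat_dim U_orth_blocks)
  also have "trace (\<Sigma> * (P * \<Sigma>)) = (\<Sum>i<r. (\<sigma> i)\<^sup>2 * P $$ (i, i))"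
    by (rule trace_diag_mult_diag[OF P])
  finally have "(\<Sum>i<r. (\<sigma> i)\<^sup>2 * P $$ (i, i)) \<le> trace (N * transpose_mat N)"
    using trace_mult_proj_le[OF P PP PT N] by simp
  also have "\<dots> \<le> (fro_norm (hcat E F))\<^sup>2"
    unfolding N_def using fro_norm_sq_ge_null_part[of "hcat E F"] E F by simp
  finally show ?thesis .
qed

lemma eq_Xn_if_null_coords_head_0:
  assumes X: "X \<in> carrier_mat n d" and CX: "C * X = D"
    and head: "\<And>i j. i < k \<Longrightarrow> j < d \<Longrightarrow> null_coords X $$ (i, j) = 0"
  shows "X = Xn"
proof (rule eq_Xn_if_V1_component_0[OF X CX])
  define W where "W = transpose_mat Q2 * augmented X"
  have W: "W \<in> carrier_mat r d"
    using carrier_matD[OF X] by (auto simp: W_def intro!: carrier_matI)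
  have split: "null_coords X = (transpose_mat V1 * W) @\<^sub>r (transpose_mat V2 * W)"
    unfolding null_coords_def W_def[symmetric] using W
    by (simp add: transpose_hcat[OF V1 V2] append_rows_mult[of _ k r _ d _ d])
  show "transpose_mat V1 * W = 0\<^sub>m k d"
  proof (rule eq_matI)
    fix i j assume ij: "i < dim_row (0\<^sub>m k d :: real mat)" "j < dim_col (0\<^sub>m k d :: real mat)"
    have "transpose_mat V1 * W \<in> carrier_mat k d" "transpose_mat V2 * W \<in> carrier_mat d d"
      using W by (auto intro!: mult_carrier_mat[OF _ W])
    then have "null_coords X $$ (i, j) = (transpose_mat V1 * W) $$ (i, j)"
      unfolding split using ij by (subst index_append_rows) auto
    then have "(transpose_mat V1 * W) $$ (i, j) = null_coords X $$ (i, j)"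
      by simp
    then show "(transpose_mat V1 * W) $$ (i, j) = 0\<^sub>m k d $$ (i, j)"
      using head ij by simp
  qed (use W in auto)
qed

lemma \<sigma>_sq_mono: "i \<le> j \<Longrightarrow> j < r \<Longrightarrow> (\<sigma> j)\<^sup>2 \<le> (\<sigma> i)\<^sup>2"
  using \<sigma>_mono \<sigma>_nonneg by (simp add: power_mono)

lemma \<sigma>_sq_gap: "0 < k \<Longrightarrow> (\<sigma> k)\<^sup>2 < (\<sigma> (k - 1))\<^sup>2"
  using gap \<sigma>_nonneg k_lt_r by (simp add: power_strict_mono)

lemma perturbation_lower_bound:
  assumes feasible: "tlse_feasible A B C D E F X"
  shows "sqrt tail \<le> fro_norm (hcat E F)"
    and "fro_norm (hcat E F) \<le> sqrt tail \<Longrightarrow> X = Xn"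
proof -
  have X: "X \<in> carrier_mat n d" and CX: "C * X = D"
    using feasible unfolding tlse_feasible_def by auto
  have L: "hcat (0\<^sub>m d n) (- 1\<^sub>m d) * (Q2 * V) \<in> carrier_mat d r"
    by (auto intro!: carrier_matI)
  obtain P K where P: "P \<in> carrier_mat r r" and K: "K \<in> carrier_mat d r"
    and P_eq: "P = null_coords X * K" and PP: "P * P = P" and PT: "transpose_mat P = P"
    and PY: "P * null_coords X = null_coords X" and trace_P: "trace P = real d"
    by (rule projection_onto_left_invertible[OF null_coords_carrier[OF X] L null_coords_left_inverse[OF X CX]])
  define h where "h i = P $$ (i, i)" for i
  have h: "0 \<le> h i \<and> h i \<le> 1" if "i < r" for i
    using proj_diag_bounds[OF P PP PT that] by (simp add: h_def)
  have mass: "(\<Sum>i<r. h i) = real (r - k)"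
    using trace_P P by (simp add: h_def trace_def)
  have weighted: "(\<Sum>i<r. (\<sigma> i)\<^sup>2 * h i) \<le> (fro_norm (hcat E F))\<^sup>2"
    unfolding h_def by (rule weighted_diag_le_fro_norm_sq[OF feasible P PP PT K P_eq])
  have "tail \<le> (\<Sum>i<r. (\<sigma> i)\<^sup>2 * h i)"
    unfolding tail_def by (rule tail_sum_le_weighted_sum[OF k_lt_r \<sigma>_sq_mono h mass])
  then show "sqrt tail \<le> fro_norm (hcat E F)"
    using weighted fro_norm_nonneg by (simp add: real_le_lsqrt)
  assume "fro_norm (hcat E F) \<le> sqrt tail"
  then have "(\<Sum>i<r. (\<sigma> i)\<^sup>2 * h i) \<le> tail"
    using weighted fro_norm_nonneg tail_def by (smt (verit) real_sqrt_le_iff real_sqrt_pow2_iff sum_nonneg zero_le_power2 power_mono)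
  then have h_head: "h i = 0" if "i < k" for i
    using weighted_sum_le_tail_sum_imp_head_weights_0[OF k_lt_r \<sigma>_sq_mono h mass \<sigma>_sq_gap] that
    unfolding tail_def by blast
  show "X = Xn"
  proof (rule eq_Xn_if_null_coords_head_0[OF X CX])
    fix i j assume i: "i < k" and j: "j < d"
    have "null_coords X $$ (i, j) = (\<Sum>l<r. P $$ (i, l) * null_coords X $$ (l, j))"
      using i j k_lt_r null_coords_carrier[OF X] P
      by (subst PY[symmetric]) (simp add: scalar_prod_def atLeast0LessThan)
    also have "\<dots> = 0"
      using proj_row_eq_0_if_diag_eq_0[OF P PP PT _ h_head[OF i, unfolded h_def]] i k_lt_r by simp
    finally show "null_coords X $$ (i, j) = 0" .
  qed
qed

lemma \<sigma>_pos: "i < k \<Longrightarrow> 0 < \<sigma> i"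
  using \<sigma>_mono[of i "k - 1"] gap \<sigma>_nonneg[of k] k_lt_r by force

lemma hcat_Ahat_Bhat: "hcat Ahat Bhat = U1 * (mat_diag k \<sigma> * transpose_mat (Q2 * V1))"
proof -
  have "hcat Ahat Bhat = (U1 * mat_diag k \<sigma>) * hcat (transpose_mat V11) (transpose_mat V21)"
    unfolding Ahat_def Bhat_def by (rule mult_hcat[symmetric, of _ q k]) (auto intro!: carrier_matI)
  also have "hcat (transpose_mat V11) (transpose_mat V21) = transpose_mat (Q2 * V1)"
    unfolding Q2_V1 by (rule transpose_append_rows[symmetric]) auto
  finally show ?thesis
    by (simp add: assoc_mult_mat_dim)
qed

lemma Ahat_Bhat_carrier: "Ahat \<in> carrier_mat q n" "Bhat \<in> carrier_mat q d"
  unfolding Ahat_def Bhat_def by (auto intro!: carrier_matI)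

lemma Ahat_mult_Xn: "Ahat * Xn = Bhat"
proof -
  have "hcat Ahat Bhat * augmented Xn = U1 * (mat_diag k \<sigma> * ((transpose_mat V1 * V2) * - V22_inv))"
    unfolding hcat_Ahat_Bhat augmented_Xn using V22_inv(3)
    by (simp add: transpose_mult_dim assoc_mult_mat_dim)
  also have "\<dots> = 0\<^sub>m q d"
    using V22_inv(3) by (simp add: V_orth_blocks)
  finally show ?thesis
    using hcat_mult_augmented_eq_0_iff[OF Ahat_Bhat_carrier Xn_carrier] by simp
qed

lemma eq_Xn_if_Ahat_mult_eq_Bhat:
  assumes X: "X \<in> carrier_mat n d" and AX: "Ahat * X = Bhat" and CX: "C * X = D"
  shows "X = Xn"
proof (rule eq_Xn_if_V1_component_0[OF X CX])
  define K where "K = transpose_mat V1 * (transpose_mat Q2 * augmented X)"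
  have K: "K \<in> carrier_mat k d"
    using carrier_matD[OF X] by (auto simp: K_def intro!: carrier_matI)
  have "U1 * (mat_diag k \<sigma> * K) = hcat Ahat Bhat * augmented X"
    unfolding hcat_Ahat_Bhat K_def using X by (simp add: transpose_mult_dim assoc_mult_mat_dim)
  also have "\<dots> = 0\<^sub>m q d"
    using hcat_mult_augmented_eq_0_iff[OF Ahat_Bhat_carrier X] AX by simp
  finally have U1_SK: "U1 * (mat_diag k \<sigma> * K) = 0\<^sub>m q d" .
  have "mat_diag k \<sigma> * K = transpose_mat U1 * (U1 * (mat_diag k \<sigma> * K))"
    using K by simp
  also have "\<dots> = 0\<^sub>m k d"
    unfolding U1_SK by simp
  finally have "mat_diag k \<sigma> * K = 0\<^sub>m k d" .
  then have "mat_diag k (\<lambda>i. 1 / \<sigma> i) * (mat_diag k \<sigma> * K) = 0\<^sub>m k d"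
    by simp
  moreover have "mat_diag k (\<lambda>i. 1 / \<sigma> i) * (mat_diag k \<sigma> * K) = K"
  proof -
    have "mat_diag k (\<lambda>i. 1 / \<sigma> i * \<sigma> i) = 1\<^sub>m k"
      by (intro eq_matI) (auto simp: mat_diag_def dest: \<sigma>_pos)
    then show ?thesis
      using K by (simp add: assoc_mult_mat_dim[symmetric])
  qed
  ultimately show "K = 0\<^sub>m k d"
    by simp
qed

end

theorem theorem2p1:
  fixes p q n d :: nat
    and A B C D :: "real mat"
    and Q1 Q2 U1 U2 V1 V2 V11 V21 V12 V22 :: "real mat"
    and \<sigma> :: "nat \<Rightarrow> real"
  assumes pos: "0 < p" "0 < q" "0 < n" "0 < d"
    and pn: "p \<le> n" and qge: "n + d - p \<le> q"
    and A: "A \<in> carrier_mat q n" and B: "B \<in> carrier_mat q d"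
    and C: "C \<in> carrier_mat p n" and D: "D \<in> carrier_mat p d"
    and Crank: "full_row_rank C"
    and Q1: "Q1 \<in> carrier_mat (n + d) p" and Q2: "Q2 \<in> carrier_mat (n + d) (n + d - p)"
    and Qorth: "orthogonal_of_order (n + d) (hcat Q1 Q2)"
    and Qrange: "colspace Q1 = colspace (transpose_mat (hcat C D))"
    and U1: "U1 \<in> carrier_mat q (n - p)" and U2: "U2 \<in> carrier_mat q (d)"
    and Uorth: "orthonormal_cols (hcat U1 U2)"
    and V1: "V1 \<in> carrier_mat (n + d - p) (n - p)" and V2: "V2 \<in> carrier_mat (n + d - p) d"
    and Vorth: "orthogonal_of_order (n + d - p) (hcat V1 V2)"
    and \<sigma>_mono: "\<And>i j. i \<le> j \<Longrightarrow> j < n + d - p \<Longrightarrow> \<sigma> j \<le> \<sigma> i"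
    and \<sigma>_nonneg: "\<And>i. i < n + d - p \<Longrightarrow> 0 \<le> \<sigma> i"
    and svd: "hcat A B * Q2 = hcat U1 U2 * mat_diag (n + d - p) \<sigma> * transpose_mat (hcat V1 V2)"
    and V11: "V11 \<in> carrier_mat n (n - p)" and V21: "V21 \<in> carrier_mat d (n - p)"
    and V12: "V12 \<in> carrier_mat n d" and V22: "V22 \<in> carrier_mat d d"
    and Vbar1: "Q2 * V1 = V11 @\<^sub>r V21"
    and Vbar2: "Q2 * V2 = V12 @\<^sub>r V22"
    and gap: "n - p > 0 \<Longrightarrow> \<sigma> (n - p - 1) > \<sigma> (n - p)"
    and V22_inv: "invertible_mat V22"
  shows "let Xn = - (V12 * the (mat_inverse V22));
             Ahat = U1 * mat_diag (n - p) \<sigma> * transpose_mat V11;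
             Bhat = U1 * mat_diag (n - p) \<sigma> * transpose_mat V21
         in (\<forall>X. tlse_solution A B C D X \<longleftrightarrow> X = Xn)
            \<and> Ahat * Xn = Bhat \<and> C * Xn = D
            \<and> (\<forall>X \<in> carrier_mat n d. Ahat * X = Bhat \<and> C * X = D \<longrightarrow> X = Xn)"
proof -
  interpret tlse_svd p q n d "n - p" "n + d - p" A B C D Q1 Q2 U1 U2 V1 V2 V11 V21 V12 V22 \<sigma>
    by (unfold_locales; (rule assms)?) (use pn pos(4) in simp_all)
  obtain E0 F0 where feasible0: "tlse_feasible A B C D E0 F0 Xn"
    and norm0: "fro_norm (hcat E0 F0) = sqrt tail"
    by (rule optimal_perturbation)
  have bound: "fro_norm (hcat E0 F0) \<le> fro_norm (hcat E F) \<and>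
      (fro_norm (hcat E F) \<le> fro_norm (hcat E0 F0) \<longrightarrow> X = Xn)"
    if "tlse_feasible A B C D E F X" for E F X
    unfolding norm0 using perturbation_lower_bound[OF that] by blast
  have solution_iff: "tlse_solution A B C D X \<longleftrightarrow> X = Xn" for X
    by (rule tlse_solution_iff_eq_if_sharp_bound[OF feasible0 bound])
  have "\<forall>X \<in> carrier_mat n d. Ahat * X = Bhat \<and> C * X = D \<longrightarrow> X = Xn"
    using eq_Xn_if_Ahat_mult_eq_Bhat by blast
  then show ?thesis
    unfolding Let_def Xn_def[symmetric] Ahat_def[symmetric] Bhat_def[symmetric]
    using solution_iff Ahat_mult_Xn C_mult_Xn by simp
qed

end
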